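(* Let $f:\mathbb{R}^d\to\mathbb{R}$ be convex with minimizer $\boldsymbol x_0=\mathop{\mathrm{argmin}}_{\boldsymbol x}f(\boldsymbol x)$, and suppose there exist $\rho>0$ and $r>0$ such that $f$ is twice differentiable on $B(\boldsymbol x_0,r)$ with $\nabla^2f(\boldsymbol x)\succeq\rho\boldsymbol I$ for all $\boldsymbol x\in B(\boldsymbol x_0,r)$. Then $$\|\boldsymbol u\|_2\ge\rho\min\{\|\boldsymbol x-\boldsymbol x_0\|_2,r\},\qquad\forall\boldsymbol u\in\partial f(\boldsymbol x),\ \boldsymbol x\in\mathbb{R}^d.$$ If moreover $g:\mathbb{R}^d\to\mathbb{R}$ is convex and $\lambda$-Lipschitz (w.r.t. $\|\cdot\|_2$) for some $\lambda<\rho r$, then $f+g$ has a unique minimizer and it belongs to $B(\boldsymbol x_0,\lambda/\rho)$.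
   Context: $B(\boldsymbol x,r)$ is the closed Euclidean ball; $\partial f$ is the subdifferential. *)

theory Defs
  imports "HOL-Analysis.Analysis"
begin

definition subdifferential :: "('a::real_inner \<Rightarrow> real) \<Rightarrow> 'a \<Rightarrow> 'a set" where
  "subdifferential f x = {u. \<forall>y. f x + inner u (y - x) \<le> f y}"

definition is_minimizer :: "('a \<Rightarrow> real) \<Rightarrow> 'a \<Rightarrow> bool" where
  "is_minimizer f z \<longleftrightarrow> (\<forall>y. f z \<le> f y)"

end

theory Submission
  imports Defs
begin

(* Restricted to the ray from x0 through x, f has derivative 0 at x0 and second derivative at
   least rho while the ray stays in cball x0 r, so at distance s < min |x - x0| r its slope is at
   least rho s; by convexity the chord slope from there to x is at least as large, and a
   subgradient at x dominates that chord slope.  For the perturbation, moving a point z with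
   |z - x0| > L / rho towards x0 decreases f faster than L while g grows at most at rate L, so
   every minimizer of f + g lies in cball x0 (L / rho), inside cball x0 r; there strong convexity
   of f makes the minimizer unique, and existence follows by compactness of cball x0 r. *)

lemma increment_ge_of_derivative_ge:
  fixes \<phi> \<phi>' :: "real \<Rightarrow> real"
  assumes "a \<le> b"
    and deriv: "\<And>t. t \<in> {a..b} \<Longrightarrow> (\<phi> has_real_derivative \<phi>' t) (at t within {a..b})"
    and bound: "\<And>t. t \<in> {a..b} \<Longrightarrow> c \<le> \<phi>' t"
  shows "c * (b - a) \<le> \<phi> b - \<phi> a"
proof -
  obtain t where t: "t \<in> {a..b}" "\<phi> b - \<phi> a = \<phi>' t * (b - a)"
    using mvt_very_simple[OF \<open>a \<le> b\<close>, of \<phi> "\<lambda>t h. \<phi>' t * h"] deriv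
    by (auto simp: has_field_derivative_def)
  then show ?thesis
    using \<open>a \<le> b\<close> bound by (simp add: mult_right_mono)
qed

lemma quadratic_lower_bound_of_second_derivative_ge:
  fixes \<phi> \<phi>' \<phi>'' :: "real \<Rightarrow> real"
  assumes "a \<le> b"
    and deriv: "\<And>t. t \<in> {a..b} \<Longrightarrow> (\<phi> has_real_derivative \<phi>' t) (at t within {a..b})"
    and deriv2: "\<And>t. t \<in> {a..b} \<Longrightarrow> (\<phi>' has_real_derivative \<phi>'' t) (at t within {a..b})"
    and bound: "\<And>t. t \<in> {a..b} \<Longrightarrow> c \<le> \<phi>'' t"
  shows "\<phi> a + \<phi>' a * (b - a) + c / 2 * (b - a)\<^sup>2 \<le> \<phi> b"
proof -
  define \<psi> where "\<psi> t = \<phi> t - \<phi>' a * (t - a) - c / 2 * (t - a)\<^sup>2" for t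
  have "(\<psi> has_real_derivative \<phi>' t - \<phi>' a - c * (t - a)) (at t within {a..b})"
    if "t \<in> {a..b}" for t
    unfolding \<psi>_def
    by (rule derivative_eq_intros deriv[OF that] refl | simp)+
  moreover have "0 \<le> \<phi>' t - \<phi>' a - c * (t - a)" if "t \<in> {a..b}" for t
  proof -
    have "c * (t - a) \<le> \<phi>' t - \<phi>' a"
      using that by (intro increment_ge_of_derivative_ge[where \<phi>' = \<phi>'']
          DERIV_subset[OF deriv2] bound) auto
    then show ?thesis by simp
  qed
  ultimately have "0 * (b - a) \<le> \<psi> b - \<psi> a"
    by (rule increment_ge_of_derivative_ge[OF \<open>a \<le> b\<close>])
  then show ?thesis
    by (simp add: \<psi>_def)
qed

lemma has_vector_derivative_along_line:
  assumes "(F has_derivative F') (at (a + t *\<^sub>R d) within S)"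
    and "(\<lambda>s. a + s *\<^sub>R d) ` T \<subseteq> S"
  shows "((\<lambda>s. F (a + s *\<^sub>R d)) has_vector_derivative F' d) (at t within T)"
proof -
  have "((\<lambda>s. a + s *\<^sub>R d) has_derivative (\<lambda>h. h *\<^sub>R d)) (at t within T)"
    by (auto intro!: derivative_eq_intros)
  from diff_chain_within[OF this has_derivative_subset[OF assms]]
  have "((\<lambda>s. F (a + s *\<^sub>R d)) has_derivative (\<lambda>h. F' (h *\<^sub>R d))) (at t within T)"
    by (simp add: o_def)
  moreover have "linear F'"
    using assms(1) by (simp add: has_derivative_linear)
  ultimately show ?thesis
    by (simp add: has_vector_derivative_def linear_scale)
qed

lemma convex_on_along_line:
  assumes "convex_on UNIV f"
  shows "convex_on UNIV (\<lambda>t. f (a + t *\<^sub>R d))"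
proof (rule convex_onI)
  fix u t s :: real
  assume "0 < u" "u < 1"
  have "a + ((1 - u) *\<^sub>R t + u *\<^sub>R s) *\<^sub>R d = (1 - u) *\<^sub>R (a + t *\<^sub>R d) + u *\<^sub>R (a + s *\<^sub>R d)"
    by (simp add: algebra_simps)
  then show "f (a + ((1 - u) *\<^sub>R t + u *\<^sub>R s) *\<^sub>R d) \<le> (1 - u) * f (a + t *\<^sub>R d) + u * f (a + s *\<^sub>R d)"
    using convex_onD[OF assms, of u] \<open>0 < u\<close> \<open>u < 1\<close> by simp
qed simp

lemma add_norm_scaleR_sgn_diff:
  fixes x y :: "'a::real_normed_vector"
  shows "y + norm (x - y) *\<^sub>R sgn (x - y) = x"
  by (cases "x = y") (simp_all add: sgn_div_norm)

locale strongly_convex_near_minimizer =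
  fixes f :: "'a::euclidean_space \<Rightarrow> real"
    and grad :: "'a \<Rightarrow> 'a"
    and H :: "'a \<Rightarrow> 'a \<Rightarrow> 'a"
    and x0 :: 'a
    and \<rho> r :: real
  assumes f_convex: "convex_on UNIV f"
    and x0_min: "is_minimizer f x0"
    and \<rho>_pos: "\<rho> > 0" and r_pos: "r > 0"
    and grad: "\<And>x. x \<in> cball x0 r \<Longrightarrow>
                  (f has_derivative (\<lambda>h. inner (grad x) h)) (at x within cball x0 r)"
    and hess: "\<And>x. x \<in> cball x0 r \<Longrightarrow> (grad has_derivative H x) (at x within cball x0 r)"
    and hess_lb: "\<And>x h. x \<in> cball x0 r \<Longrightarrow> \<rho> * inner h h \<le> inner h (H x h)"
begin

lemma grad_x0: "grad x0 = 0"
proof -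
  have "at x0 within cball x0 r = at x0"
    using r_pos by (intro at_within_interior) simp
  then have "(f has_derivative (\<lambda>h. inner (grad x0) h)) (at x0)"
    using grad[of x0] r_pos by simp
  moreover have "eventually (\<lambda>y. f x0 \<le> f y) (at x0)"
    using x0_min by (simp add: is_minimizer_def)
  ultimately have "(\<lambda>h. inner (grad x0) h) = (\<lambda>h. 0)"
    by (rule has_derivative_local_min)
  then show ?thesis
    by (metis inner_eq_zero_iff)
qed

lemma f_along_line_has_derivative:
  assumes "(\<lambda>s. a + s *\<^sub>R d) ` T \<subseteq> cball x0 r" "t \<in> T"
  shows "((\<lambda>s. f (a + s *\<^sub>R d)) has_real_derivative inner (grad (a + t *\<^sub>R d)) d) (at t within T)"
  using has_vector_derivative_along_line[OF grad assms(1)] assms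
  by (auto simp: has_real_derivative_iff_has_vector_derivative)

lemma grad_along_line_has_derivative:
  assumes "(\<lambda>s. a + s *\<^sub>R d) ` T \<subseteq> cball x0 r" "t \<in> T"
  shows "((\<lambda>s. inner (grad (a + s *\<^sub>R d)) d) has_real_derivative inner d (H (a + t *\<^sub>R d) d))
           (at t within T)"
proof -
  have "((\<lambda>s. grad (a + s *\<^sub>R d)) has_derivative (\<lambda>h. h *\<^sub>R H (a + t *\<^sub>R d) d)) (at t within T)"
    using has_vector_derivative_along_line[OF hess assms(1)] assms
    by (auto simp: has_vector_derivative_def)
  from bounded_linear.has_derivative[OF bounded_linear_inner_left[of d] this] show ?thesis
    by (simp add: has_real_derivative_iff_has_vector_derivative has_vector_derivative_def inner_commute)
qed

lemma strong_convexity_ineq: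
  assumes "a \<in> cball x0 r" "b \<in> cball x0 r"
  shows "f a + inner (grad a) (b - a) + \<rho> / 2 * (norm (b - a))\<^sup>2 \<le> f b"
proof -
  define d where "d = b - a"
  have segment: "(\<lambda>t. a + t *\<^sub>R d) ` {0..1} \<subseteq> cball x0 r"
  proof clarify
    fix t :: real
    assume "t \<in> {0..1}"
    then have "(1 - t) *\<^sub>R a + t *\<^sub>R b \<in> cball x0 r"
      using convexD_alt[OF convex_cball assms] by simp
    then show "a + t *\<^sub>R d \<in> cball x0 r"
      by (simp add: d_def algebra_simps)
  qed
  have "f (a + 0 *\<^sub>R d) + inner (grad (a + 0 *\<^sub>R d)) d * (1 - 0) + (\<rho> * inner d d) / 2 * (1 - 0)\<^sup>2
          \<le> f (a + 1 *\<^sub>R d)"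
  proof (rule quadratic_lower_bound_of_second_derivative_ge)
    fix t :: real
    assume t: "t \<in> {0..1}"
    show "((\<lambda>s. f (a + s *\<^sub>R d)) has_real_derivative inner (grad (a + t *\<^sub>R d)) d) (at t within {0..1})"
      using f_along_line_has_derivative[OF segment t] .
    show "((\<lambda>s. inner (grad (a + s *\<^sub>R d)) d) has_real_derivative inner d (H (a + t *\<^sub>R d) d))
            (at t within {0..1})"
      using grad_along_line_has_derivative[OF segment t] .
    show "\<rho> * inner d d \<le> inner d (H (a + t *\<^sub>R d) d)"
      using hess_lb segment t by blast
  qed simp
  then show ?thesis
    by (simp add: d_def power2_norm_eq_inner)
qed

lemma tangent_ineq:
  assumes "a \<in> cball x0 r" "b \<in> cball x0 r"
  shows "f a + inner (grad a) (b - a) \<le> f b"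
proof -
  have "0 \<le> \<rho> / 2 * (norm (b - a))\<^sup>2"
    using \<rho>_pos by simp
  then show ?thesis
    using strong_convexity_ineq[OF assms] by linarith
qed

lemma radial_derivative_ge:
  assumes "norm e = 1" "0 \<le> s" "s \<le> r"
  shows "\<rho> * s \<le> inner (grad (x0 + s *\<^sub>R e)) e"
proof (cases "s = 0")
  case True
  then show ?thesis
    by (simp add: grad_x0)
next
  case False
  define y where "y = x0 + s *\<^sub>R e"
  have "y \<in> cball x0 r" "x0 \<in> cball x0 r"
    using assms r_pos by (auto simp: y_def dist_norm)
  \<comment> \<open>Adding the two strong convexity inequalities between x0 and y, where grad x0 = 0.\<close>
  from strong_convexity_ineq[OF this(2,1)] strong_convexity_ineq[OF this]
  have "\<rho> * s\<^sup>2 \<le> s * inner (grad y) e"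
    using assms by (simp add: y_def grad_x0 power_mult_distrib)
  then show ?thesis
    using False assms by (simp add: y_def power2_eq_square)
qed

lemma radial_increment_ge:
  assumes e: "norm e = 1" and s: "0 \<le> s" "s < t" "s < r"
  shows "\<rho> * s * (t - s) \<le> f (x0 + t *\<^sub>R e) - f (x0 + s *\<^sub>R e)"
proof -
  define h where "h u = f (x0 + u *\<^sub>R e)" for u
  define m where "m = min t r"
  have "s < m" "m \<le> t" "m \<le> r"
    using s by (auto simp: m_def)
  have in_cball: "x0 + u *\<^sub>R e \<in> cball x0 r" if "0 \<le> u" "u \<le> r" for u
    using e that by (simp add: dist_norm)
  have "\<rho> * s * (m - s) \<le> inner (grad (x0 + s *\<^sub>R e)) e * (m - s)"
    using radial_derivative_ge[OF e s(1)] s \<open>s < m\<close> by (simp add: mult_right_mono)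
  also have "\<dots> \<le> h m - h s"
    using tangent_ineq[OF in_cball in_cball, of s m] s \<open>s < m\<close> \<open>m \<le> r\<close>
    by (simp add: h_def algebra_simps)
  finally have "\<rho> * s \<le> (h m - h s) / (m - s)"
    using \<open>s < m\<close> by (simp add: pos_le_divide_eq)
  \<comment> \<open>Beyond the ball, convexity of h keeps the chord slope at least the slope up to m.\<close>
  also have "\<dots> \<le> (h t - h s) / (t - s)"
  proof (cases "m = t")
    case False
    then have "m < t"
      using \<open>m \<le> t\<close> by simp
    have "convex_on UNIV h"
      unfolding h_def by (rule convex_on_along_line[OF f_convex])
    from convex_on_slope_le(1)[OF this UNIV_I UNIV_I \<open>s < m\<close> \<open>m < t\<close>] show ?thesis
      by (metis minus_diff_eq minus_divide_divide)
  qed simp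
  finally show ?thesis
    using s by (simp add: pos_le_divide_eq h_def mult.commute)
qed

lemma subgradient_norm_ge:
  assumes u: "u \<in> subdifferential f x"
  shows "\<rho> * min (norm (x - x0)) r \<le> norm u"
proof (cases "x = x0")
  case True
  then show ?thesis
    using r_pos by simp
next
  case False
  define D e where "D = norm (x - x0)" and "e = sgn (x - x0)"
  have e: "norm e = 1" and x: "x0 + D *\<^sub>R e = x"
    using False add_norm_scaleR_sgn_diff[of x0 x] by (simp_all add: D_def e_def norm_sgn)
  have bound: "\<rho> * s \<le> norm u" if s: "0 \<le> s" "s < min D r" for s
  proof -
    have "f x + inner u ((x0 + s *\<^sub>R e) - x) \<le> f (x0 + s *\<^sub>R e)"
      using u by (simp add: subdifferential_def)
    moreover have "(x0 + s *\<^sub>R e) - x = - ((D - s) *\<^sub>R e)"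
      using x by (auto simp: algebra_simps)
    ultimately have "f x - f (x0 + s *\<^sub>R e) \<le> (D - s) * inner u e"
      by simp
    moreover have "\<rho> * s * (D - s) \<le> f x - f (x0 + s *\<^sub>R e)"
      using radial_increment_ge[OF e s(1), of D] s x by simp
    moreover have "(D - s) * inner u e \<le> (D - s) * norm u"
      using norm_cauchy_schwarz[of u e] e s by (simp add: mult_left_mono)
    ultimately have "(D - s) * (\<rho> * s) \<le> (D - s) * norm u"
      by (simp add: mult.commute)
    then show ?thesis
      using s by simp
  qed
  show ?thesis
  proof (rule dense_le_bounded)
    show "0 < \<rho> * min (norm (x - x0)) r"
      using False \<rho>_pos r_pos by simp
    fix w
    assume "0 < w" "w < \<rho> * min (norm (x - x0)) r"
    then have "0 \<le> w / \<rho>" "w / \<rho> < min D r"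
      using \<rho>_pos by (simp_all only: D_def pos_divide_less_eq mult.commute) simp
    then have "\<rho> * (w / \<rho>) \<le> norm u"
      by (rule bound)
    then show "w \<le> norm u"
      using \<rho>_pos by simp
  qed
qed

lemma midpoint_strict_convexity:
  assumes "z1 \<in> cball x0 r" "z2 \<in> cball x0 r"
  shows "f (midpoint z1 z2) + \<rho> / 8 * (norm (z1 - z2))\<^sup>2 \<le> (f z1 + f z2) / 2"
proof -
  define m where "m = midpoint z1 z2"
  have "m \<in> cball x0 r"
    using closed_segment_subset[OF assms convex_cball] midpoint_in_closed_segment[of z1 z2]
    unfolding m_def by blast
  have opposite: "z1 - m = - (z2 - m)"
    by (simp add: m_def midpoint_def algebra_simps flip: scaleR_2)
  have half: "norm (z2 - m) = norm (z1 - z2) / 2"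
    by (simp add: m_def dist_midpoint flip: dist_norm)
  from strong_convexity_ineq[OF \<open>m \<in> cball x0 r\<close> assms(1)]
       strong_convexity_ineq[OF \<open>m \<in> cball x0 r\<close> assms(2)]
  have "2 * f m + \<rho> * (norm (z2 - m))\<^sup>2 \<le> f z1 + f z2"
    unfolding opposite inner_minus_right norm_minus_cancel by linarith
  then show ?thesis
    unfolding half by (simp add: m_def power_divide)
qed

end

locale lipschitz_perturbation =
  strongly_convex_near_minimizer f grad H x0 \<rho> r
  for f :: "'a::euclidean_space \<Rightarrow> real" and grad H x0 \<rho> r +
  fixes g :: "'a \<Rightarrow> real" and L :: real
  assumes g_convex: "convex_on UNIV g"
    and g_lipschitz: "L-lipschitz_on UNIV g"
    and L_lt: "L < \<rho> * r"
begin

lemma descent_toward_x0: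
  assumes "L / \<rho> < norm (z - x0)"
  obtains y where "norm (y - x0) < r" "f y + g y < f z + g z"
proof -
  define D e where "D = norm (z - x0)" and "e = sgn (z - x0)"
  have "0 \<le> L / \<rho>"
    using lipschitz_on_nonneg[OF g_lipschitz] \<rho>_pos by simp
  then have "z \<noteq> x0"
    using assms by auto
  then have e: "norm e = 1" and z: "x0 + D *\<^sub>R e = z"
    using add_norm_scaleR_sgn_diff[of x0 z] by (simp_all add: D_def e_def norm_sgn)
  have "L / \<rho> < min D r"
    using assms L_lt \<rho>_pos by (simp add: D_def pos_divide_less_eq mult.commute)
  then obtain s where s: "L / \<rho> < s" "s < min D r"
    using dense by blast
  have "0 \<le> s"
    using \<open>0 \<le> L / \<rho>\<close> s by linarith
  have "L < \<rho> * s"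
    using s \<rho>_pos by (simp add: pos_divide_less_eq mult.commute)
  define y where "y = x0 + s *\<^sub>R e"
  have "z - y = (D - s) *\<^sub>R e"
    unfolding y_def z[symmetric] by (simp add: algebra_simps)
  then have "dist y z = norm ((D - s) *\<^sub>R e)"
    by (metis dist_commute dist_norm)
  then have "dist y z = D - s"
    using e s by simp
  then have "g y - g z \<le> L * (D - s)"
    using lipschitz_onD[OF g_lipschitz UNIV_I UNIV_I, of y z] by (simp add: dist_real_def)
  also have "\<dots> < \<rho> * s * (D - s)"
    using \<open>L < \<rho> * s\<close> s by simp
  also have "\<dots> \<le> f z - f y"
    using radial_increment_ge[OF e \<open>0 \<le> s\<close>, of D] s z by (simp add: y_def)
  finally have "f y + g y < f z + g z"
    by simp
  moreover have "norm (y - x0) < r"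
    using e s \<open>0 \<le> s\<close> by (simp add: y_def)
  ultimately show ?thesis
    using that by blast
qed

lemma minimizer_in_cball:
  assumes "is_minimizer (\<lambda>x. f x + g x) z"
  shows "z \<in> cball x0 (L / \<rho>)"
proof (rule ccontr)
  assume "z \<notin> cball x0 (L / \<rho>)"
  then have "L / \<rho> < norm (z - x0)"
    by (simp add: dist_norm norm_minus_commute)
  then obtain y where "f y + g y < f z + g z"
    by (rule descent_toward_x0)
  with assms show False
    by (simp add: is_minimizer_def not_le[symmetric])
qed

lemma minimizer_exists: "\<exists>z. is_minimizer (\<lambda>x. f x + g x) z"
proof -
  have "continuous_on UNIV (\<lambda>x. f x + g x)"
    using convex_on_continuous[OF open_UNIV f_convex] lipschitz_on_continuous_on[OF g_lipschitz]
    by (intro continuous_on_add)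
  then have "continuous_on (cball x0 r) (\<lambda>x. f x + g x)"
    by (rule continuous_on_subset) simp
  moreover have "cball x0 r \<noteq> {}"
    using r_pos by simp
  ultimately obtain z where z_min: "\<forall>y \<in> cball x0 r. f z + g z \<le> f y + g y"
    using continuous_attains_inf[OF compact_cball] by blast
  have "f z + g z \<le> f y + g y" for y
  proof (cases "y \<in> cball x0 r")
    case False
    then have "r < norm (y - x0)"
      by (simp add: dist_norm norm_minus_commute)
    then have "L < \<rho> * norm (y - x0)"
      using L_lt mult_strict_left_mono[OF _ \<rho>_pos] by (meson less_trans)
    then have "L / \<rho> < norm (y - x0)"
      using \<rho>_pos by (simp add: pos_divide_less_eq mult.commute)
    then obtain y' where "norm (y' - x0) < r" "f y' + g y' < f y + g y"
      by (rule descent_toward_x0)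
    moreover from this(1) have "y' \<in> cball x0 r"
      by (simp add: dist_norm norm_minus_commute)
    ultimately show ?thesis
      using z_min by fastforce
  qed (use z_min in blast)
  then show ?thesis
    by (auto simp: is_minimizer_def)
qed

lemma minimizer_unique:
  assumes z1: "is_minimizer (\<lambda>x. f x + g x) z1" and z2: "is_minimizer (\<lambda>x. f x + g x) z2"
  shows "z1 = z2"
proof -
  have "L / \<rho> < r"
    using L_lt \<rho>_pos by (simp add: pos_divide_less_eq mult.commute)
  then have "z1 \<in> cball x0 r" "z2 \<in> cball x0 r"
    using minimizer_in_cball[OF z1] minimizer_in_cball[OF z2] by auto
  from midpoint_strict_convexity[OF this]
  have "f (midpoint z1 z2) + \<rho> / 8 * (norm (z1 - z2))\<^sup>2 \<le> (f z1 + f z2) / 2" .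
  moreover have "g (midpoint z1 z2) \<le> (g z1 + g z2) / 2"
    using convex_onD[OF g_convex, of "1/2" z1 z2] by (simp add: midpoint_def algebra_simps)
  moreover have "f z1 + g z1 \<le> f (midpoint z1 z2) + g (midpoint z1 z2)" "f z1 + g z1 = f z2 + g z2"
    using z1 z2 by (auto simp: is_minimizer_def intro: order_antisym)
  ultimately have "\<rho> / 8 * (norm (z1 - z2))\<^sup>2 \<le> 0"
    by argo
  then show ?thesis
    using \<rho>_pos by (simp add: mult_le_0_iff)
qed

end

theorem lemmaE2:
  fixes f :: "'a::euclidean_space \<Rightarrow> real"
    and grad :: "'a \<Rightarrow> 'a"
    and H :: "'a \<Rightarrow> 'a \<Rightarrow> 'a"
    and x0 :: 'a
    and \<rho> r :: real
  assumes f_convex: "convex_on UNIV f"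
    and x0_min: "is_minimizer f x0"
    and \<rho>_pos: "\<rho> > 0" and r_pos: "r > 0"
    and grad: "\<And>x. x \<in> cball x0 r \<Longrightarrow>
                  (f has_derivative (\<lambda>h. inner (grad x) h)) (at x within cball x0 r)"
    and hess: "\<And>x. x \<in> cball x0 r \<Longrightarrow> (grad has_derivative H x) (at x within cball x0 r)"
    and hess_lb: "\<And>x h. x \<in> cball x0 r \<Longrightarrow> \<rho> * inner h h \<le> inner h (H x h)"
  shows "(\<forall>x u. u \<in> subdifferential f x \<longrightarrow> norm u \<ge> \<rho> * min (norm (x - x0)) r)
     \<and> (\<forall>(g :: 'a \<Rightarrow> real) L. convex_on UNIV g \<and> L-lipschitz_on UNIV g \<and> L < \<rho> * r \<longrightarrow>
          (\<exists>!z. is_minimizer (\<lambda>x. f x + g x) z) \<and>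
          (\<forall>z. is_minimizer (\<lambda>x. f x + g x) z \<longrightarrow> z \<in> cball x0 (L / \<rho>)))"
proof -
  interpret strongly_convex_near_minimizer f grad H x0 \<rho> r
    using assms by unfold_locales auto
  have "(\<exists>!z. is_minimizer (\<lambda>x. f x + g x) z) \<and>
          (\<forall>z. is_minimizer (\<lambda>x. f x + g x) z \<longrightarrow> z \<in> cball x0 (L / \<rho>))"
    if "convex_on UNIV g \<and> L-lipschitz_on UNIV g \<and> L < \<rho> * r" for g L
  proof -
    interpret lipschitz_perturbation f grad H x0 \<rho> r g L
      using that by unfold_locales auto
    show ?thesis
      using minimizer_exists minimizer_unique minimizer_in_cball by blast
  qed
  then show ?thesis
    using subgradient_norm_ge by blast
qed

end
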